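(* Let $h:\mathcal{X}\to\mathcal{Y}$ be such that for every $\lambda\ge0$ the function $(x,x')\mapsto d_{\mathcal{Y}}(h(x),h(x'))-\lambda d_{\mathcal{X}}(x,x')$ is continuous on $\mathcal{X}\times\mathcal{X}$. Then \[ R(h)=\inf_{\lambda\ge0}\Big\{\lambda\epsilon+\mathbf{E}_{P_X}\big[r_\lambda(h,X)\big]\Big\},\qquad r_\lambda(h,x)=\sup_{x'\in\mathcal{X}}\big\{d_{\mathcal{Y}}(h(x),h(x'))-\lambda d_{\mathcal{X}}(x,x')\big\}. \]
   Context: $(\mathcal{X},d_{\mathcal{X}})$ and $(\mathcal{Y},d_{\mathcal{Y}})$ are complete separable metric spaces; $P_X$ is a Borel probability distribution on $\mathcal{X}$ and $\epsilon>0$. The fair regularizer is \[ R(h)=\sup\Big\{\mathbf{E}_\Pi[d_{\mathcal{Y}}(h(X),h(X'))]\;:\;\Pi\in\Delta(\mathcal{X}\times\mathcal{X}),\ \mathbf{E}_\Pi[d_{\mathcal{X}}(X,X')]\le\epsilon,\ \Pi(\cdot,\mathcal{X})=P_X\Big\}, \] where $\Delta(\mathcal{X}\times\mathcal{X})$ is the set of Borel probability measures on $\mathcal{X}\times\mathcal{X}$, $(X,X')\sim\Pi$, and $\Pi(\cdot,\mathcal{X})$ denotes the first marginal of $\Pi$. *)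

theory Defs
  imports "HOL-Probability.Probability"
begin

text \<open>Expectations of nonnegative quantities are nonnegative Lebesgue integrals (values in ennreal),
  so R(h) may be infinite.\<close>
definition fair_reg :: "'a::polish_space measure \<Rightarrow> real \<Rightarrow> ('a \<Rightarrow> 'b::polish_space) \<Rightarrow> ennreal" where
  "fair_reg P eps h = (SUP Pi \<in> {Pi :: ('a \<times> 'a) measure.
        prob_space Pi \<and> sets Pi = sets (borel :: ('a \<times> 'a) measure) \<and>
        (\<integral>\<^sup>+ p. ennreal (dist (fst p) (snd p)) \<partial>Pi) \<le> ennreal eps \<and>
        distr Pi borel fst = P}.
      \<integral>\<^sup>+ p. ennreal (dist (h (fst p)) (h (snd p))) \<partial>Pi)"

text \<open>r_lambda(h,x) = sup over x' of d(h x, h x') - lambda d(x,x'); this is always \<ge> 0 (take x' = x).\<close>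
definition r_lam :: "real \<Rightarrow> ('a::metric_space \<Rightarrow> 'b::metric_space) \<Rightarrow> 'a \<Rightarrow> ereal" where
  "r_lam lam h x = (SUP x' \<in> UNIV. ereal (dist (h x) (h x') - lam * dist x x'))"

end

theory Submission
  imports Defs
begin

text \<open>Weak duality is the pointwise bound \<open>d(h x, h x') \<le> \<lambda> d(x, x') + r\<^sub>\<lambda>(h, x)\<close>
  integrated against a feasible coupling. For the converse we may assume \<open>R(h) < \<infinity>\<close>. Mixing two
  couplings mixes their costs and values linearly, so the value of the transport problem is a
  concave function of the budget, and a supporting line at \<open>\<epsilon>\<close> gives a multiplier \<open>\<lambda> \<ge> 0\<close> with
  \<open>E\<^sub>Q d(h X, h X') + \<lambda> \<epsilon> \<le> R(h) + \<lambda> E\<^sub>Q d(X, X')\<close> for every coupling \<open>Q\<close> of finite cost.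
  Testing this on the couplings \<open>(X, T X)\<close> induced by measurable near-maximisers \<open>T\<close> of
  \<open>x' \<mapsto> d(h x, h x') - \<lambda> d(x, x')\<close> gives \<open>\<lambda> \<epsilon> + E r\<^sub>\<lambda>(h, X) \<le> R(h)\<close>. Such selections exist
  because the hypothesis (already for \<open>\<lambda> = 0\<close>) makes \<open>h\<close> continuous, so the supremum defining
  \<open>r\<^sub>\<lambda>\<close> may be taken over a countable dense set.\<close>

lemma continuous_on_of_continuous_dist:
  fixes h :: "'a::metric_space \<Rightarrow> 'b::metric_space"
  assumes "continuous_on UNIV (\<lambda>(x, x'). dist (h x) (h x'))"
  shows "continuous_on UNIV h"
  unfolding continuous_on_iff
proof (intro ballI allI impI)
  fix x :: 'a and e :: real assume "0 < e"
  with assms obtain d where "d > 0"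
    and d: "\<And>p. dist p (x, x) < d \<Longrightarrow> dist ((\<lambda>(x, x'). dist (h x) (h x')) p) (dist (h x) (h x)) < e"
    unfolding continuous_on_iff by (metis UNIV_I case_prod_conv)
  have "dist (h x') (h x) < e" if "dist x' x < d" for x'
    using d[of "(x, x')"] that by (simp add: dist_Pair_Pair dist_commute)
  with \<open>d > 0\<close> show "\<exists>d>0. \<forall>x'\<in>UNIV. dist x' x < d \<longrightarrow> dist (h x') (h x) < e" by blast
qed

lemma SUP_ereal_dense_eq:
  fixes f :: "'a::topological_space \<Rightarrow> real"
  assumes cont: "continuous_on UNIV f" and dense: "\<And>U. open U \<Longrightarrow> U \<noteq> {} \<Longrightarrow> \<exists>d\<in>D. d \<in> U"
  shows "(SUP x\<in>D. ereal (f x)) = (SUP x. ereal (f x))"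
proof (rule antisym)
  show "(SUP x\<in>D. ereal (f x)) \<le> (SUP x. ereal (f x))"
    by (rule SUP_subset_mono) auto
  show "(SUP x. ereal (f x)) \<le> (SUP x\<in>D. ereal (f x))"
  proof (rule SUP_least, rule ereal_le_epsilon2)
    fix y and e :: real assume "0 < e"
    have "open {z. f y - e < f z}"
      by (rule open_Collect_less) (auto intro: continuous_intros cont)
    moreover have "y \<in> {z. f y - e < f z}" using \<open>0 < e\<close> by simp
    ultimately obtain d where "d \<in> D" "f y - e < f d" using dense by blast
    then have "ereal (f y) \<le> ereal (f d) + ereal e" by simp
    also have "\<dots> \<le> (SUP x\<in>D. ereal (f x)) + ereal e"
      using \<open>d \<in> D\<close> by (intro add_right_mono SUP_upper)
    finally show "ereal (f y) \<le> (SUP x\<in>D. ereal (f x)) + ereal e" .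
  qed
qed

lemma borel_measurable_SUP_continuous:
  fixes g :: "'a \<Rightarrow> 'b::second_countable_topology \<Rightarrow> real"
  assumes meas: "\<And>y. (\<lambda>x. g x y) \<in> borel_measurable M" and cont: "\<And>x. continuous_on UNIV (g x)"
  shows "(\<lambda>x. SUP y. ereal (g x y)) \<in> borel_measurable M"
proof -
  obtain D :: "'b set" where "countable D" and dense: "\<And>U. open U \<Longrightarrow> U \<noteq> {} \<Longrightarrow> \<exists>d\<in>D. d \<in> U"
    using countable_dense_setE by blast
  have "(\<lambda>x. SUP y\<in>D. ereal (g x y)) \<in> borel_measurable M"
    using \<open>countable D\<close> meas by measurable
  then show ?thesis by (simp add: SUP_ereal_dense_eq[OF cont dense])
qed

lemma measurable_selection_above:
  fixes g :: "'a \<Rightarrow> 'b::second_countable_topology \<Rightarrow> real"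
  assumes meas: "\<And>y. (\<lambda>x. g x y) \<in> borel_measurable M" and cont: "\<And>x. continuous_on UNIV (g x)"
    and m: "m \<in> borel_measurable M" and below: "\<And>x. ereal (m x) < (SUP y. ereal (g x y))"
  obtains T where "T \<in> M \<rightarrow>\<^sub>M borel" and "\<And>x. m x < g x (T x)"
proof -
  obtain D :: "'b set" where "countable D" and dense: "\<And>U. open U \<Longrightarrow> U \<noteq> {} \<Longrightarrow> \<exists>d\<in>D. d \<in> U"
    using countable_dense_setE by blast
  define e where "e = from_nat_into D"
  have "D \<noteq> {}" using dense[of UNIV] by auto
  then have range_e: "range e = D" unfolding e_def by (rule range_from_nat_into[OF _ \<open>countable D\<close>])
  define N where "N x = (LEAST n. m x < g x (e n))" for x
  have "\<exists>n. m x < g x (e n)" for x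
  proof -
    from below[of x] obtain y where "y \<in> D" "m x < g x y"
      by (auto simp: SUP_ereal_dense_eq[OF cont dense, symmetric] less_SUP_iff)
    with range_e show ?thesis by auto
  qed
  then have "m x < g x (e (N x))" for x unfolding N_def by (rule LeastI_ex)
  moreover have "N \<in> M \<rightarrow>\<^sub>M count_space UNIV" unfolding N_def using meas m by measurable
  then have "e \<circ> N \<in> M \<rightarrow>\<^sub>M borel" by (rule measurable_comp) simp
  ultimately show ?thesis using that[of "e \<circ> N"] by simp
qed

lemma supporting_line_exists:
  fixes A :: "(real \<times> real) set" and eps V :: real
  assumes "0 < eps" and "(0, 0) \<in> A"
    and mix: "\<And>c v c' v' q. (c, v) \<in> A \<Longrightarrow> (c', v') \<in> A \<Longrightarrow> 0 \<le> q \<Longrightarrow> q \<le> 1 \<Longrightarrow>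
      q * c + (1 - q) * c' \<le> eps \<Longrightarrow> q * v + (1 - q) * v' \<le> V"
  obtains lam where "0 \<le> lam" and "\<And>c v. (c, v) \<in> A \<Longrightarrow> v \<le> V + lam * (c - eps)"
proof -
  have feasible: "v \<le> V" if "(c, v) \<in> A" "c \<le> eps" for c v
    using mix[OF that(1) that(1), of 1] that(2) by simp
  \<comment> \<open>\<open>lam\<close> is the steepest chord from \<open>(eps, V)\<close> to a point of \<open>A\<close> beyond the budget; mixing
    such a point with one below the budget shows that chords to the left are no flatter.\<close>
  define S where "S = {(v - V) / (c - eps) | c v. (c, v) \<in> A \<and> eps < c}"
  have S_bound: "s \<le> V / eps" if "s \<in> S" for s
  proof -
    from that obtain c v where cv: "(c, v) \<in> A" "eps < c" and s: "s = (v - V) / (c - eps)"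
      unfolding S_def by blast
    have "eps / c * v \<le> V"
      using mix[OF cv(1) assms(2), of "eps / c"] cv(2) \<open>0 < eps\<close> by simp
    then have "v - V \<le> V / eps * (c - eps)"
      using cv(2) \<open>0 < eps\<close> by (simp add: field_simps)
    then show ?thesis unfolding s using cv(2) by (simp add: divide_le_eq)
  qed
  define lam where "lam = Sup (insert 0 S)"
  have bdd: "bdd_above (insert 0 S)"
    using S_bound by (intro bdd_aboveI[of _ "max 0 (V / eps)"]) force
  have "0 \<le> lam" unfolding lam_def by (rule cSup_upper[OF _ bdd]) simp
  moreover have "v \<le> V + lam * (c - eps)" if cv: "(c, v) \<in> A" for c v
  proof (cases c eps rule: linorder_cases)
    case greater
    then have "(v - V) / (c - eps) \<le> lam"
      unfolding lam_def using cv by (intro cSup_upper[OF _ bdd]) (auto simp: S_def)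
    then show ?thesis using greater by (simp add: divide_le_eq algebra_simps)
  next
    case equal
    then show ?thesis using feasible[OF cv] by simp
  next
    case less
    have "lam \<le> (V - v) / (eps - c)" unfolding lam_def
    proof (rule cSup_least)
      fix s assume "s \<in> insert 0 S"
      then consider "s = 0" | c' v' where "(c', v') \<in> A" "eps < c'" "s = (v' - V) / (c' - eps)"
        unfolding S_def by blast
      then show "s \<le> (V - v) / (eps - c)"
      proof cases
        case 1
        then show ?thesis using feasible[OF cv] less by simp
      next
        case 2
        define q where "q = (eps - c) / (c' - c)"
        have q: "0 \<le> q" "q \<le> 1" "q * (c' - c) = eps - c"
          using less 2(2) unfolding q_def by (auto simp: field_simps)
        then have "q * v' + (1 - q) * v \<le> V"
          by (intro mix[OF 2(1) cv]) (simp_all add: algebra_simps)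
        then have "(c' - c) * (q * v' + (1 - q) * v) \<le> (c' - c) * V"
          using less 2(2) by (intro mult_left_mono) auto
        moreover have "(c' - c) * (q * v' + (1 - q) * v) = (eps - c) * v' + (c' - eps) * v"
          using q(3) by algebra
        moreover have "(eps - c) * (v' - V) - (c' - eps) * (V - v) = (eps - c) * v' + (c' - eps) * v - (c' - c) * V"
          by (simp add: algebra_simps)
        ultimately have "(eps - c) * (v' - V) \<le> (c' - eps) * (V - v)" by linarith
        then show ?thesis
          unfolding 2(3) using less 2(2) by (simp add: divide_le_eq le_divide_eq mult.commute)
      qed
    qed simp
    then show ?thesis using less by (simp add: le_divide_eq algebra_simps)
  qed
  ultimately show ?thesis by (rule that)
qed

lemma nn_integral_monotone_convergence_le:
  assumes "incseq f" and "\<And>i. f i \<in> borel_measurable M" and "\<And>i. (\<integral>\<^sup>+ x. f i x \<partial>M) + c \<le> C"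
  shows "(\<integral>\<^sup>+ x. (SUP i. f i x) \<partial>M) + c \<le> C"
  using assms
  by (simp add: nn_integral_monotone_convergence_SUP ennreal_SUP_add_left[symmetric] SUP_least)

definition couplings :: "'a::polish_space measure \<Rightarrow> ('a \<times> 'a) measure set" where
  "couplings P = {Q. prob_space Q \<and> sets Q = sets (borel :: ('a \<times> 'a) measure) \<and> distr Q borel fst = P}"

definition expected_dist :: "('a \<Rightarrow> 'b::metric_space) \<Rightarrow> ('a \<times> 'a) measure \<Rightarrow> ennreal" where
  "expected_dist f Q = (\<integral>\<^sup>+ p. ennreal (dist (f (fst p)) (f (snd p))) \<partial>Q)"

lemma fair_reg_eq_SUP_couplings:
  "fair_reg P eps h = (SUP Q \<in> {Q \<in> couplings P. expected_dist id Q \<le> ennreal eps}. expected_dist h Q)"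
  unfolding fair_reg_def couplings_def expected_dist_def by (rule SUP_cong) auto

lemma borel_measurable_dist_pair:
  fixes f :: "'a::topological_space \<Rightarrow> 'b::metric_space"
  assumes "continuous_on UNIV f"
  shows "(\<lambda>p. ennreal (dist (f (fst p)) (f (snd p)))) \<in> borel_measurable borel"
proof -
  have "continuous_on UNIV (\<lambda>p. f (fst p))" "continuous_on UNIV (\<lambda>p. f (snd p))"
    by (rule continuous_on_compose2[OF assms], intro continuous_intros, simp)+
  then have "continuous_on UNIV (\<lambda>p. dist (f (fst p)) (f (snd p)))"
    by (rule continuous_on_dist)
  then have "(\<lambda>p. dist (f (fst p)) (f (snd p))) \<in> borel_measurable borel"
    by (rule borel_measurable_continuous_onI)
  then show ?thesis by measurable
qed

lemma couplings_measurable_eq: "Q \<in> couplings P \<Longrightarrow> measurable Q N = measurable borel N"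
  unfolding couplings_def by (intro measurable_cong_sets) auto

lemma nn_integral_fst_coupling:
  assumes "Q \<in> couplings P" and "f \<in> borel_measurable borel"
  shows "(\<integral>\<^sup>+ p. f (fst p) \<partial>Q) = (\<integral>\<^sup>+ x. f x \<partial>P)"
proof -
  have "(\<integral>\<^sup>+ p. f (fst p) \<partial>Q) = (\<integral>\<^sup>+ x. f x \<partial>distr Q borel fst)"
    using assms by (subst nn_integral_distr) (auto simp: couplings_measurable_eq borel_prod[symmetric])
  also have "distr Q borel fst = P" using assms(1) unfolding couplings_def by simp
  finally show ?thesis .
qed

lemma couplings_mixture:
  assumes Q1: "Q1 \<in> couplings P" and Q2: "Q2 \<in> couplings P" and "0 \<le> q" "q \<le> 1"
  obtains Q where "Q \<in> couplings P" and "\<And>f. f \<in> borel_measurable borel \<Longrightarrow>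
    (\<integral>\<^sup>+ p. f p \<partial>Q) = ennreal q * (\<integral>\<^sup>+ p. f p \<partial>Q1) + ennreal (1 - q) * (\<integral>\<^sup>+ p. f p \<partial>Q2)"
proof -
  define B where "B = measure_pmf (bernoulli_pmf q)"
  define K where "K b = (if b then Q1 else Q2)" for b
  define Q where "Q = B \<bind> K"
  have K: "K \<in> B \<rightarrow>\<^sub>M subprob_algebra borel"
    using Q1 Q2 unfolding B_def measurable_pmf_measure1 K_def couplings_def
    by (auto simp: space_subprob_algebra prob_space_imp_subprob_space)
  have Kb: "prob_space (K b)" "sets (K b) = sets borel" "distr (K b) borel fst = P" for b
    using Q1 Q2 unfolding K_def couplings_def by auto
  have sets_Q: "sets Q = sets borel" unfolding Q_def using Kb by (intro sets_bind) (auto simp: B_def)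
  have integral_Q: "(\<integral>\<^sup>+ p. f p \<partial>Q) = ennreal q * (\<integral>\<^sup>+ p. f p \<partial>Q1) + ennreal (1 - q) * (\<integral>\<^sup>+ p. f p \<partial>Q2)"
    if "f \<in> borel_measurable borel" for f
  proof -
    have "(\<integral>\<^sup>+ p. f p \<partial>Q) = (\<integral>\<^sup>+ b. \<integral>\<^sup>+ p. f p \<partial>K b \<partial>B)"
      unfolding Q_def by (rule nn_integral_bind[OF that K])
    then show ?thesis unfolding B_def using \<open>0 \<le> q\<close> \<open>q \<le> 1\<close> by (simp add: K_def mult.commute)
  qed
  have "space Q = UNIV" using sets_Q by (metis sets_eq_imp_space_eq space_borel)
  then have "emeasure Q (space Q) = ennreal q + ennreal (1 - q)"
    using integral_Q[of "\<lambda>_. 1"] Kb(1)[of True] Kb(1)[of False]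
    by (simp add: prob_space.emeasure_space_1 K_def)
  also have "\<dots> = 1" using \<open>0 \<le> q\<close> \<open>q \<le> 1\<close> by (simp flip: ennreal_plus)
  finally have "prob_space Q" by (rule prob_spaceI)
  have "fst \<in> K True \<rightarrow>\<^sub>M borel"
    unfolding measurable_cong_sets[OF Kb(2) refl] by (simp add: borel_prod[symmetric])
  from prob_space.prob_space_distr[OF Kb(1) this] have "prob_space P" by (simp add: Kb(3))
  have "distr Q borel fst = B \<bind> (\<lambda>b. distr (K b) borel fst)"
    unfolding Q_def by (rule distr_bind[OF K]) (auto simp: B_def borel_prod[symmetric])
  also have "\<dots> = P" unfolding Kb(3) B_def using \<open>prob_space P\<close>
    by (intro bind_const') (auto intro: prob_space_imp_subprob_space prob_space_measure_pmf)
  finally have "Q \<in> couplings P" using \<open>prob_space Q\<close> sets_Q unfolding couplings_def by auto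
  from this integral_Q show ?thesis by (rule that)
qed

definition graph_coupling :: "'a::polish_space measure \<Rightarrow> ('a \<Rightarrow> 'a) \<Rightarrow> ('a \<times> 'a) measure" where
  "graph_coupling P T = distr P borel (\<lambda>x. (x, T x))"

lemma measurable_graph:
  fixes T :: "'a::polish_space \<Rightarrow> 'a"
  assumes "sets P = sets borel" and "T \<in> borel_measurable borel"
  shows "(\<lambda>x. (x, T x)) \<in> P \<rightarrow>\<^sub>M borel"
  using assms by (simp add: measurable_cong_sets[OF assms(1) refl] borel_prod[symmetric])

lemma graph_coupling_in_couplings:
  assumes "prob_space P" and "sets P = sets borel" and "T \<in> borel_measurable borel"
  shows "graph_coupling P T \<in> couplings P"
proof -
  note graph = measurable_graph[OF assms(2,3)]
  have "distr (graph_coupling P T) borel fst = distr P borel (fst \<circ> (\<lambda>x. (x, T x)))"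
    unfolding graph_coupling_def by (rule distr_distr[OF _ graph]) (simp add: borel_prod[symmetric])
  also have "\<dots> = P" using assms(2) by (simp add: o_def distr_id2)
  finally show ?thesis
    unfolding couplings_def graph_coupling_def using prob_space.prob_space_distr[OF assms(1) graph] by simp
qed

lemma nn_integral_graph_coupling:
  assumes "sets P = sets borel" and "T \<in> borel_measurable borel" and "f \<in> borel_measurable borel"
  shows "(\<integral>\<^sup>+ p. f p \<partial>graph_coupling P T) = (\<integral>\<^sup>+ x. f (x, T x) \<partial>P)"
  unfolding graph_coupling_def using assms by (simp add: nn_integral_distr measurable_graph)

lemma expected_dist_graph_coupling:
  assumes "sets P = sets borel" and "T \<in> borel_measurable borel" and "continuous_on UNIV f"
  shows "expected_dist f (graph_coupling P T) = (\<integral>\<^sup>+ x. ennreal (dist (f x) (f (T x))) \<partial>P)"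
  unfolding expected_dist_def
  using nn_integral_graph_coupling[OF assms(1,2) borel_measurable_dist_pair[OF assms(3)]] by simp

lemma r_lam_nonneg: "0 \<le> r_lam lam h x"
  unfolding r_lam_def by (rule SUP_upper2[of x]) (simp_all add: zero_ereal_def)

lemma dist_le_r_lam:
  assumes "0 \<le> lam"
  shows "ennreal (dist (h x) (h y)) \<le> ennreal (lam * dist x y) + e2ennreal (r_lam lam h x)"
proof (cases "r_lam lam h x")
  case (real t)
  have "ereal (dist (h x) (h y) - lam * dist x y) \<le> r_lam lam h x"
    unfolding r_lam_def by (rule SUP_upper) simp
  then have "ennreal (dist (h x) (h y)) \<le> ennreal (lam * dist x y + t)"
    using real by (intro ennreal_leI) simp
  also have "\<dots> = ennreal (lam * dist x y) + e2ennreal (r_lam lam h x)"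
    using real r_lam_nonneg[of lam h x] assms by (simp add: ennreal_plus e2ennreal_ereal)
  finally show ?thesis .
next
  case MInf
  then show ?thesis using r_lam_nonneg[of lam h x] by simp
qed simp

locale fair_duality = prob_space P for P :: "'a::polish_space measure" +
  fixes h :: "'a \<Rightarrow> 'b::polish_space" and eps :: real
  assumes sets_P: "sets P = sets borel" and eps_pos: "0 < eps" and continuous_h: "continuous_on UNIV h"
begin

lemma measurable_P: "measurable P N = measurable borel N"
  by (rule measurable_cong_sets[OF sets_P refl])

lemma continuous_on_lagrangian: "continuous_on UNIV (\<lambda>y. dist (h x) (h y) - lam * dist x y)"
  using continuous_h by (auto intro!: continuous_intros)

lemma borel_measurable_lagrangian: "(\<lambda>x. dist (h x) (h y) - lam * dist x y) \<in> borel_measurable borel"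
  using continuous_h by (auto intro!: borel_measurable_continuous_onI continuous_intros)

lemma borel_measurable_r_lam: "(\<lambda>x. e2ennreal (r_lam lam h x)) \<in> borel_measurable borel"
proof -
  have "(\<lambda>x. r_lam lam h x) \<in> borel_measurable borel"
    unfolding r_lam_def
    by (rule borel_measurable_SUP_continuous[OF borel_measurable_lagrangian continuous_on_lagrangian])
  then show ?thesis by measurable
qed

lemma expected_dist_le_dual:
  assumes Q: "Q \<in> couplings P" and "0 \<le> lam"
  shows "expected_dist h Q \<le> ennreal lam * expected_dist id Q + (\<integral>\<^sup>+ x. e2ennreal (r_lam lam h x) \<partial>P)"
proof -
  have "expected_dist h Q \<le> (\<integral>\<^sup>+ p. ennreal lam * ennreal (dist (fst p) (snd p)) + e2ennreal (r_lam lam h (fst p)) \<partial>Q)"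
    unfolding expected_dist_def using dist_le_r_lam \<open>0 \<le> lam\<close>
    by (intro nn_integral_mono) (simp add: ennreal_mult')
  also have "\<dots> = ennreal lam * expected_dist id Q + (\<integral>\<^sup>+ p. e2ennreal (r_lam lam h (fst p)) \<partial>Q)"
    unfolding expected_dist_def
    using borel_measurable_dist_pair[OF continuous_on_id] borel_measurable_r_lam
    by (simp add: nn_integral_add nn_integral_cmult couplings_measurable_eq[OF Q] borel_prod[symmetric])
  also have "(\<integral>\<^sup>+ p. e2ennreal (r_lam lam h (fst p)) \<partial>Q) = (\<integral>\<^sup>+ x. e2ennreal (r_lam lam h x) \<partial>P)"
    by (rule nn_integral_fst_coupling[OF Q borel_measurable_r_lam])
  finally show ?thesis .
qed

lemma fair_reg_le_dual:
  "fair_reg P eps h \<le> (INF lam \<in> {0..}. ennreal (lam * eps) + (\<integral>\<^sup>+ x. e2ennreal (r_lam lam h x) \<partial>P))"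
  unfolding fair_reg_eq_SUP_couplings
proof (intro INF_greatest SUP_least, clarify)
  fix lam :: real and Q assume "0 \<le> lam" "Q \<in> couplings P" "expected_dist id Q \<le> ennreal eps"
  then have "ennreal lam * expected_dist id Q \<le> ennreal (lam * eps)"
    by (simp add: ennreal_mult' mult_left_mono)
  then show "expected_dist h Q \<le> ennreal (lam * eps) + (\<integral>\<^sup>+ x. e2ennreal (r_lam lam h x) \<partial>P)"
    using expected_dist_le_dual[OF \<open>Q \<in> couplings P\<close> \<open>0 \<le> lam\<close>] by (meson add_right_mono order_trans)
qed

lemma diagonal_coupling: "graph_coupling P (\<lambda>x. x) \<in> couplings P"
  by (rule graph_coupling_in_couplings[OF prob_space_axioms sets_P]) simp

lemma expected_dist_diagonal:
  "continuous_on UNIV f \<Longrightarrow> expected_dist f (graph_coupling P (\<lambda>x. x)) = 0"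
  by (simp add: expected_dist_graph_coupling[OF sets_P])

definition cost_value_pairs :: "(real \<times> real) set" where
  "cost_value_pairs = {(enn2real (expected_dist id Q), enn2real (expected_dist h Q)) | Q.
    Q \<in> couplings P \<and> expected_dist id Q < \<top>}"

lemma zero_in_cost_value_pairs: "(0, 0) \<in> cost_value_pairs"
  unfolding cost_value_pairs_def using diagonal_coupling
  by (force simp: expected_dist_diagonal continuous_h continuous_on_id')

context
  fixes V :: real
  assumes fair_reg_eq: "fair_reg P eps h = ennreal V" and V_nonneg: "0 \<le> V"
begin

lemma expected_dist_le_value:
  "Q \<in> couplings P \<Longrightarrow> expected_dist id Q \<le> ennreal eps \<Longrightarrow> expected_dist h Q \<le> ennreal V"
  unfolding fair_reg_eq[symmetric] fair_reg_eq_SUP_couplings by (rule SUP_upper) simp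

lemma mixture_le_value:
  assumes "Q1 \<in> couplings P" and "Q2 \<in> couplings P" and "0 \<le> q" and "q \<le> 1"
    and "ennreal q * expected_dist id Q1 + ennreal (1 - q) * expected_dist id Q2 \<le> ennreal eps"
  shows "ennreal q * expected_dist h Q1 + ennreal (1 - q) * expected_dist h Q2 \<le> ennreal V"
proof -
  obtain Q where Q: "Q \<in> couplings P" and integral_Q: "\<And>f. f \<in> borel_measurable borel \<Longrightarrow>
    (\<integral>\<^sup>+ p. f p \<partial>Q) = ennreal q * (\<integral>\<^sup>+ p. f p \<partial>Q1) + ennreal (1 - q) * (\<integral>\<^sup>+ p. f p \<partial>Q2)"
    using couplings_mixture[OF assms(1-4)] by blast
  have "expected_dist id Q = ennreal q * expected_dist id Q1 + ennreal (1 - q) * expected_dist id Q2"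
    unfolding expected_dist_def by (rule integral_Q[OF borel_measurable_dist_pair[OF continuous_on_id']])
  moreover have "expected_dist h Q = ennreal q * expected_dist h Q1 + ennreal (1 - q) * expected_dist h Q2"
    unfolding expected_dist_def by (rule integral_Q[OF borel_measurable_dist_pair[OF continuous_h]])
  ultimately show ?thesis using expected_dist_le_value[OF Q] assms(5) by simp
qed

lemma expected_dist_finite:
  assumes Q: "Q \<in> couplings P" and "expected_dist id Q < \<top>"
  shows "expected_dist h Q < \<top>"
proof -
  obtain c where c: "expected_dist id Q = ennreal c" "0 \<le> c"
    using assms(2) by (auto simp: less_top_ennreal)
  define q where "q = eps / (eps + c)"
  have q: "0 < q" "q \<le> 1" "q * c \<le> eps"
    using c(2) eps_pos unfolding q_def by (auto simp: field_simps)
  have "ennreal q * expected_dist id Q = ennreal (q * c)"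
    using q c by (simp add: ennreal_mult')
  then have "ennreal q * expected_dist id Q + ennreal (1 - q) * expected_dist id (graph_coupling P (\<lambda>x. x))
      \<le> ennreal eps"
    using q by (simp add: expected_dist_diagonal continuous_on_id' ennreal_leI)
  from mixture_le_value[OF Q diagonal_coupling _ q(2) this] q(1)
  have "ennreal q * expected_dist h Q \<le> ennreal V"
    by (simp add: expected_dist_diagonal continuous_h)
  then have "ennreal q * expected_dist h Q < \<top>" using ennreal_less_top le_less_trans by blast
  with q(1) show ?thesis by (auto simp: ennreal_mult_less_top)
qed

lemma cost_value_pairs_mixture:
  assumes "(c, v) \<in> cost_value_pairs" and "(c', v') \<in> cost_value_pairs"
    and "0 \<le> q" and "q \<le> 1" and "q * c + (1 - q) * c' \<le> eps"
  shows "q * v + (1 - q) * v' \<le> V"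
proof -
  from assms(1,2) obtain Q Q' where Q: "Q \<in> couplings P" "expected_dist id Q < \<top>"
    and Q': "Q' \<in> couplings P" "expected_dist id Q' < \<top>"
    and cv: "c = enn2real (expected_dist id Q)" "v = enn2real (expected_dist h Q)"
    and cv': "c' = enn2real (expected_dist id Q')" "v' = enn2real (expected_dist h Q')"
    unfolding cost_value_pairs_def by blast
  have cost: "ennreal q * expected_dist id Q + ennreal (1 - q) * expected_dist id Q'
      = ennreal (q * c + (1 - q) * c')"
    using Q(2) Q'(2) assms(3,4) unfolding cv cv' by (simp add: ennreal_mult' ennreal_plus)
  have val: "ennreal q * expected_dist h Q + ennreal (1 - q) * expected_dist h Q'
      = ennreal (q * v + (1 - q) * v')"
    using expected_dist_finite[OF Q] expected_dist_finite[OF Q'] assms(3,4) unfolding cv cv'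
    by (simp add: ennreal_mult' ennreal_plus)
  have "ennreal q * expected_dist id Q + ennreal (1 - q) * expected_dist id Q' \<le> ennreal eps"
    unfolding cost using assms(5) by (rule ennreal_leI)
  then have "ennreal (q * v + (1 - q) * v') \<le> ennreal V"
    unfolding val[symmetric] by (rule mixture_le_value[OF Q(1) Q'(1) assms(3,4)])
  then show ?thesis using V_nonneg by simp
qed

lemma lagrange_multiplier_exists:
  obtains lam where "0 \<le> lam" and "\<And>Q. Q \<in> couplings P \<Longrightarrow> expected_dist id Q < \<top> \<Longrightarrow>
    expected_dist h Q + ennreal (lam * eps) \<le> ennreal V + ennreal lam * expected_dist id Q"
proof -
  obtain lam where lam: "0 \<le> lam"
    and line: "\<And>c v. (c, v) \<in> cost_value_pairs \<Longrightarrow> v \<le> V + lam * (c - eps)"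
    using supporting_line_exists[OF eps_pos zero_in_cost_value_pairs] cost_value_pairs_mixture by blast
  have "expected_dist h Q + ennreal (lam * eps) \<le> ennreal V + ennreal lam * expected_dist id Q"
    if "Q \<in> couplings P" and "expected_dist id Q < \<top>" for Q
  proof -
    have "enn2real (expected_dist h Q) + lam * eps \<le> V + lam * enn2real (expected_dist id Q)"
      using line[of "enn2real (expected_dist id Q)" "enn2real (expected_dist h Q)"] that
      by (auto simp: cost_value_pairs_def algebra_simps)
    then have "ennreal (enn2real (expected_dist h Q) + lam * eps) \<le> ennreal (V + lam * enn2real (expected_dist id Q))"
      by (rule ennreal_leI)
    then show ?thesis
      using lam eps_pos V_nonneg that(2) expected_dist_finite[OF that]
      by (simp add: ennreal_plus ennreal_mult')
  qed
  with lam show ?thesis by (rule that)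
qed

context
  fixes lam :: real
  assumes lam_nonneg: "0 \<le> lam"
    and multiplier: "\<And>Q. Q \<in> couplings P \<Longrightarrow> expected_dist id Q < \<top> \<Longrightarrow>
      expected_dist h Q + ennreal (lam * eps) \<le> ennreal V + ennreal lam * expected_dist id Q"
begin

lemma nn_integral_le_of_bounded_map:
  assumes T: "T \<in> borel_measurable borel" and K: "\<And>x. dist x (T x) \<le> K"
    and m: "m \<in> borel_measurable borel" "\<And>x. 0 \<le> m x"
    and gain: "\<And>x. m x \<le> dist (h x) (h (T x)) - lam * dist x (T x) + d" and "0 \<le> d"
  shows "(\<integral>\<^sup>+ x. ennreal (m x) \<partial>P) + ennreal (lam * eps) \<le> ennreal V + ennreal d"
proof -
  define Q where "Q = graph_coupling P T"
  have Q: "Q \<in> couplings P"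
    unfolding Q_def by (rule graph_coupling_in_couplings[OF prob_space_axioms sets_P T])
  have cost: "expected_dist id Q = (\<integral>\<^sup>+ x. ennreal (dist x (T x)) \<partial>P)"
    unfolding Q_def using expected_dist_graph_coupling[OF sets_P T continuous_on_id'] by simp
  have val: "expected_dist h Q = (\<integral>\<^sup>+ x. ennreal (dist (h x) (h (T x))) \<partial>P)"
    unfolding Q_def by (rule expected_dist_graph_coupling[OF sets_P T continuous_h])
  have "expected_dist id Q \<le> (\<integral>\<^sup>+ x. ennreal K \<partial>P)"
    unfolding cost using K by (intro nn_integral_mono ennreal_leI)
  then have finite_cost: "expected_dist id Q < \<top>"
    using emeasure_space_1 by (simp add: le_less_trans)
  have h_meas: "h \<in> borel_measurable borel"
    by (rule borel_measurable_continuous_onI[OF continuous_h])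
  define I where "I = (\<integral>\<^sup>+ x. ennreal (m x) \<partial>P)"
  have "ennreal lam * expected_dist id Q + I
      = (\<integral>\<^sup>+ x. ennreal lam * ennreal (dist x (T x)) + ennreal (m x) \<partial>P)"
    unfolding cost I_def using T m by (simp add: nn_integral_add nn_integral_cmult measurable_P)
  also have "\<dots> \<le> (\<integral>\<^sup>+ x. ennreal (dist (h x) (h (T x))) + ennreal d \<partial>P)"
  proof (rule nn_integral_mono)
    fix x
    have "ennreal lam * ennreal (dist x (T x)) + ennreal (m x) = ennreal (lam * dist x (T x) + m x)"
      using lam_nonneg m(2) by (simp add: ennreal_mult' ennreal_plus)
    also have "\<dots> \<le> ennreal (dist (h x) (h (T x)) + d)"
      using gain[of x] by (intro ennreal_leI) simp
    also have "\<dots> = ennreal (dist (h x) (h (T x))) + ennreal d"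
      using \<open>0 \<le> d\<close> by (simp add: ennreal_plus)
    finally show "ennreal lam * ennreal (dist x (T x)) + ennreal (m x) \<le> ennreal (dist (h x) (h (T x))) + ennreal d" .
  qed
  also have "\<dots> = expected_dist h Q + ennreal d"
    unfolding val using T h_meas by (simp add: nn_integral_add measurable_P emeasure_space_1)
  finally have main: "ennreal lam * expected_dist id Q + I \<le> expected_dist h Q + ennreal d" .
  have "ennreal lam * expected_dist id Q + (I + ennreal (lam * eps))
      = (ennreal lam * expected_dist id Q + I) + ennreal (lam * eps)"
    by (simp add: add.assoc)
  also have "\<dots> \<le> (expected_dist h Q + ennreal (lam * eps)) + ennreal d"
    using add_right_mono[OF main, of "ennreal (lam * eps)"] by (simp add: ac_simps)
  also have "\<dots> \<le> ennreal lam * expected_dist id Q + (ennreal V + ennreal d)"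
    using add_right_mono[OF multiplier[OF Q finite_cost], of "ennreal d"] by (simp add: ac_simps)
  finally show ?thesis
    unfolding I_def using finite_cost by (auto simp: ennreal_add_left_cancel_le ennreal_mult_eq_top_iff)
qed

lemma nn_integral_le_of_map:
  assumes T: "T \<in> borel_measurable borel"
    and m: "m \<in> borel_measurable borel" "\<And>x. 0 \<le> m x"
    and gain: "\<And>x. m x - d < dist (h x) (h (T x)) - lam * dist x (T x)" and "0 < d"
  shows "(\<integral>\<^sup>+ x. ennreal (m x) \<partial>P) + ennreal (lam * eps) \<le> ennreal V + ennreal d"
proof -
  \<comment> \<open>Where \<open>T\<close> moves a point further than \<open>n\<close>, replace it by the identity: this keeps the
    transport cost finite, so that the multiplier inequality applies.\<close>
  define A where "A n = {x. dist x (T x) \<le> real n}" for n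
  have A_sets: "A n \<in> sets borel" for n unfolding A_def using T by measurable
  define f where "f n x = ennreal (m x) * indicator (A n) x" for n x
  have "(\<integral>\<^sup>+ x. f n x \<partial>P) + ennreal (lam * eps) \<le> ennreal V + ennreal d" for n
  proof -
    define T' where "T' x = (if x \<in> A n then T x else x)" for x
    have "T' \<in> borel_measurable borel" unfolding T'_def using T A_sets by measurable
    moreover have "dist x (T' x) \<le> real n" for x by (simp add: T'_def A_def)
    moreover have "(\<lambda>x. m x * indicator (A n) x) \<in> borel_measurable borel"
      using m(1) A_sets by measurable
    moreover have "m x * indicator (A n) x \<le> dist (h x) (h (T' x)) - lam * dist x (T' x) + d" for x
      using gain[of x] \<open>0 < d\<close> by (simp add: T'_def indicator_def less_imp_le)
    ultimately have "(\<integral>\<^sup>+ x. ennreal (m x * indicator (A n) x) \<partial>P) + ennreal (lam * eps)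
        \<le> ennreal V + ennreal d"
      using m(2) \<open>0 < d\<close> by (intro nn_integral_le_of_bounded_map) simp_all
    then show ?thesis by (simp add: f_def ennreal_mult' ennreal_indicator m(2))
  qed
  moreover have "incseq f"
    unfolding incseq_def f_def A_def by (auto intro!: le_funI mult_left_mono simp: indicator_def)
  moreover have "(SUP n. f n x) = ennreal (m x)" for x
  proof (rule antisym)
    show "(SUP n. f n x) \<le> ennreal (m x)" by (rule SUP_least) (simp add: f_def indicator_def)
    obtain n where "dist x (T x) \<le> real n" using real_arch_simple by blast
    then have "f n x = ennreal (m x)" by (simp add: f_def A_def)
    then show "ennreal (m x) \<le> (SUP n. f n x)" by (metis SUP_upper UNIV_I)
  qed
  moreover have "f n \<in> borel_measurable P" for n
    unfolding f_def measurable_P using m(1) A_sets by measurable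
  ultimately show ?thesis
    using nn_integral_monotone_convergence_le[of f P] by simp
qed

lemma nn_integral_min_r_lam_le:
  assumes "0 < d"
  shows "(\<integral>\<^sup>+ x. min (e2ennreal (r_lam lam h x)) (ennreal M) \<partial>P) + ennreal (lam * eps) \<le> ennreal V + ennreal d"
proof -
  \<comment> \<open>The truncation at \<open>M\<close> gives a finite level to select above, also where \<open>r\<^sub>\<lambda>\<close> is infinite.\<close>
  define m where "m x = enn2real (min (e2ennreal (r_lam lam h x)) (ennreal M))" for x
  have m_eq: "ennreal (m x) = min (e2ennreal (r_lam lam h x)) (ennreal M)" for x
    unfolding m_def by (simp add: min_less_iff_disj)
  have m_meas: "m \<in> borel_measurable borel"
    unfolding m_def using borel_measurable_r_lam by measurable
  have m_nonneg: "0 \<le> m x" for x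
    unfolding m_def by simp
  have below: "ereal (m x - d) < (SUP y. ereal (dist (h x) (h y) - lam * dist x y))" for x
  proof -
    have "ereal (m x - d) < ereal (m x)" using \<open>0 < d\<close> by simp
    also have "ennreal (m x) \<le> e2ennreal (r_lam lam h x)" unfolding m_eq by simp
    then have "enn2ereal (ennreal (m x)) \<le> enn2ereal (e2ennreal (r_lam lam h x))"
      by (simp add: less_eq_ennreal.rep_eq)
    then have "ereal (m x) \<le> r_lam lam h x"
      by (simp add: enn2ereal_e2ennreal r_lam_nonneg m_nonneg)
    finally show ?thesis unfolding r_lam_def .
  qed
  have target: "(\<lambda>x. m x - d) \<in> borel_measurable borel" using m_meas by measurable
  obtain T where T: "T \<in> borel_measurable borel"
    and gain: "\<And>x. m x - d < dist (h x) (h (T x)) - lam * dist x (T x)"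
    using measurable_selection_above[OF borel_measurable_lagrangian continuous_on_lagrangian target below] by blast
  show ?thesis
    using nn_integral_le_of_map[OF T m_meas m_nonneg gain \<open>0 < d\<close>] by (simp add: m_eq)
qed

lemma nn_integral_r_lam_le:
  "(\<integral>\<^sup>+ x. e2ennreal (r_lam lam h x) \<partial>P) + ennreal (lam * eps) \<le> ennreal V"
proof (rule ennreal_le_epsilon)
  fix d :: real assume "0 < d"
  define f where "f n x = min (e2ennreal (r_lam lam h x)) (of_nat n)" for n x
  have "(SUP n. f n x) = e2ennreal (r_lam lam h x)" for x
  proof -
    have "(SUP n. f n x) = min (e2ennreal (r_lam lam h x)) (SUP n. of_nat n)"
      unfolding f_def using inf_SUP[of "e2ennreal (r_lam lam h x)" of_nat UNIV] by (simp add: inf_min)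
    then show ?thesis by (simp add: ennreal_SUP_of_nat_eq_top)
  qed
  moreover have "incseq f"
    unfolding incseq_def f_def by (auto intro!: le_funI min.mono)
  moreover have "f n \<in> borel_measurable P" for n
    unfolding f_def measurable_P using borel_measurable_r_lam by measurable
  moreover have "(\<integral>\<^sup>+ x. f n x \<partial>P) + ennreal (lam * eps) \<le> ennreal V + ennreal d" for n
    using nn_integral_min_r_lam_le[OF \<open>0 < d\<close>, of "real n"] by (simp add: f_def ennreal_of_nat_eq_real_of_nat)
  ultimately show "(\<integral>\<^sup>+ x. e2ennreal (r_lam lam h x) \<partial>P) + ennreal (lam * eps) \<le> ennreal V + ennreal d"
    using nn_integral_monotone_convergence_le[of f P] by simp
qed

end

lemma dual_le_value:
  "(INF lam \<in> {0..}. ennreal (lam * eps) + (\<integral>\<^sup>+ x. e2ennreal (r_lam lam h x) \<partial>P)) \<le> ennreal V"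
proof -
  obtain lam where lam: "0 \<le> lam" and multiplier: "\<And>Q. Q \<in> couplings P \<Longrightarrow> expected_dist id Q < \<top> \<Longrightarrow>
    expected_dist h Q + ennreal (lam * eps) \<le> ennreal V + ennreal lam * expected_dist id Q"
    using lagrange_multiplier_exists by blast
  have "(\<integral>\<^sup>+ x. e2ennreal (r_lam lam h x) \<partial>P) + ennreal (lam * eps) \<le> ennreal V"
    by (rule nn_integral_r_lam_le[OF lam multiplier])
  then have "ennreal (lam * eps) + (\<integral>\<^sup>+ x. e2ennreal (r_lam lam h x) \<partial>P) \<le> ennreal V"
    by (simp add: add.commute)
  with lam show ?thesis by (auto intro: INF_lower2)
qed

end

end

theorem theorem2p3:
  fixes P :: "'a::polish_space measure" and h :: "'a \<Rightarrow> 'b::polish_space" and eps :: real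
  assumes "prob_space P" and "sets P = sets (borel :: 'a measure)"
    and "eps > 0"
    and "\<forall>lam \<ge> 0. continuous_on UNIV (\<lambda>(x, x'). dist (h x) (h x') - lam * dist x x')"
  shows "fair_reg P eps h =
    (INF lam \<in> {0..}. ennreal (lam * eps) + (\<integral>\<^sup>+ x. e2ennreal (r_lam lam h x) \<partial>P))"
proof -
  have "continuous_on UNIV (\<lambda>(x, x'). dist (h x) (h x'))"
    using assms(4) by fastforce
  then have "continuous_on UNIV h" by (rule continuous_on_of_continuous_dist)
  then interpret fair_duality P h eps
    by (rule fair_duality.intro[OF assms(1) fair_duality_axioms.intro[OF assms(2,3)]])
  show ?thesis
  proof (rule antisym[OF fair_reg_le_dual])
    show "(INF lam \<in> {0..}. ennreal (lam * eps) + (\<integral>\<^sup>+ x. e2ennreal (r_lam lam h x) \<partial>P)) \<le> fair_reg P eps h"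
    proof (cases "fair_reg P eps h")
      case (real V)
      then show ?thesis using dual_le_value by simp
    qed simp
  qed
qed

end
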